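(* The randomized query complexity of $TARSKI(2,k)$ is $\Omega(k)$: there is a constant $c>0$ such that for every $k\in\mathbb{N}$ it is at least $ck$.
   Context: $TARSKI(2,k)$: given oracle access to an unknown function $f:\{0,1\}^k\to\{0,1\}^k$ that is monotone for the componentwise order ($a\le b$ iff $a_i\le b_i$ for all $i$; monotone means $a\le b\Rightarrow f(a)\le f(b)$), where a query of $v$ returns $f(v)$, find $x$ with $f(x)=x$. The randomized query complexity is the minimum, over randomized algorithms that on every input output a fixed point with probability at least $9/10$, of the worst-case expected number of queries (expectation over the algorithm's coins). *)

theory Defs
  imports "HOL-Probability.Probability"
begin

text \<open>Points of the Boolean hypercube {0,1}^k are bit lists of length k
  (False = 0, True = 1); the order is the componentwise order.\<close>

definition cube :: "nat \<Rightarrow> bool list set" where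
  "cube k = {x. length x = k}"

definition cw_le :: "bool list \<Rightarrow> bool list \<Rightarrow> bool" where
  "cw_le a b \<longleftrightarrow> list_all2 (\<le>) a b"

text \<open>Outside the cube the function is
  fixed to the identity (a canonical convention; only values on the cube matter).\<close>

definition tarski_input :: "nat \<Rightarrow> (bool list \<Rightarrow> bool list) \<Rightarrow> bool" where
  "tarski_input k f \<longleftrightarrow>
     (\<forall>x\<in>cube k. f x \<in> cube k) \<and>
     (\<forall>a\<in>cube k. \<forall>b\<in>cube k. cw_le a b \<longrightarrow> cw_le (f a) (f b)) \<and>
     (\<forall>x. x \<notin> cube k \<longrightarrow> f x = x)"

text \<open>Deterministic query algorithms = decision trees: a node queries a point v and
  branches on the answer f v; a leaf outputs a point.\<close>

datatype dtree = Leaf "bool list" | Query "bool list" "bool list \<Rightarrow> dtree"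

primrec run :: "(bool list \<Rightarrow> bool list) \<Rightarrow> dtree \<Rightarrow> bool list \<times> nat" where
  "run f (Leaf x) = (x, 0)"
| "run f (Query v g) = (let r = run f (g (f v)) in (fst r, Suc (snd r)))"

definition alg_output :: "(bool list \<Rightarrow> bool list) \<Rightarrow> dtree \<Rightarrow> bool list" where
  "alg_output f t = fst (run f t)"

definition num_queries :: "(bool list \<Rightarrow> bool list) \<Rightarrow> dtree \<Rightarrow> nat" where
  "num_queries f t = snd (run f t)"

text \<open>Randomized algorithms = probability distributions over deterministic decision trees.\<close>

definition solves :: "nat \<Rightarrow> dtree pmf \<Rightarrow> bool" where
  "solves k T \<longleftrightarrow> (\<forall>f. tarski_input k f \<longrightarrow>
      measure_pmf.prob T {t. alg_output f t \<in> cube k \<and> f (alg_output f t) = alg_output f t} \<ge> 9/10)"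

definition expected_queries :: "dtree pmf \<Rightarrow> (bool list \<Rightarrow> bool list) \<Rightarrow> ennreal" where
  "expected_queries T f = (\<integral>\<^sup>+ t. ennreal (real (num_queries f t)) \<partial>measure_pmf T)"

definition rand_query_complexity :: "nat \<Rightarrow> ennreal" where
  "rand_query_complexity k =
     (INF T\<in>{T. solves k T}. SUP f\<in>{f. tarski_input k f}. expected_queries T f)"

end

theory Submission
  imports Defs
begin

text \<open>
  For a secret \<open>s \<in> {0,1}\<^sup>k\<close> let \<open>f\<^sub>s(v)\<close> copy the longest common prefix of \<open>v\<close> and \<open>s\<close>,
  then take the bit of \<open>s\<close> at the first disagreement and fill the remaining positions
  with the bit of \<open>v\<close> there. This map is monotone, its only fixed point is \<open>s\<close>, and a
  query reveals nothing about \<open>s\<close> beyond how long \<open>v\<close> agrees with it.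

  Fix a deterministic decision tree and a cylinder of secrets with prefix \<open>p\<close>, leaving
  \<open>d\<close> bits free. If the tree finds \<open>C\<close> of these secrets, their total number of queries is
  at least \<open>((d + 1) C - 2\<^sup>d) / 2\<close>. By induction on the tree: a query \<open>v\<close> outside
  the cylinder gets a constant answer, and one inside it splits the cylinder along the path of
  \<open>v\<close> into sub-cylinders of codimension \<open>1, 2, \<dots>\<close>, each of which again gets a constant
  answer and so pays one query per secret. For the whole cube, averaging over a randomized
  algorithm that succeeds with probability \<open>9/10\<close> on each \<open>f\<^sub>s\<close> (Yao's principle) bounds
  the worst-case expected number of queries below by \<open>(9(k + 1)/10 - 1)/2\<close>, which is at
  least \<open>2k/5\<close> for \<open>k \<ge> 1\<close>.
\<close>

fun hard_fun :: "bool list \<Rightarrow> bool list \<Rightarrow> bool list" where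
  "hard_fun (a # s) (b # v) = (if a = b then a # hard_fun s v else a # replicate (length v) b)"
| "hard_fun _ _ = []"

definition hard_instance :: "nat \<Rightarrow> bool list \<Rightarrow> bool list \<Rightarrow> bool list" where
  "hard_instance k s v = (if length v = k then hard_fun s v else v)"

lemma length_hard_fun: "length s = length v \<Longrightarrow> length (hard_fun s v) = length v"
  by (induction s v rule: hard_fun.induct) auto

lemma hard_fun_self: "hard_fun s s = s"
  by (induction s) auto

lemma hard_fun_fixed_point: "length s = length v \<Longrightarrow> hard_fun s v = v \<Longrightarrow> v = s"
  by (induction s v rule: hard_fun.induct) (auto split: if_splits)

lemma cw_le_replicate_True: "length a = n \<Longrightarrow> cw_le a (replicate n True)"
  by (induction a arbitrary: n) (auto simp: cw_le_def)

lemma cw_le_replicate_False: "length a = n \<Longrightarrow> cw_le (replicate n False) a"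
  by (induction a arbitrary: n) (auto simp: cw_le_def)

lemma cw_le_Cons: "cw_le (x # a) (y # b) \<longleftrightarrow> x \<le> y \<and> cw_le a b"
  by (simp add: cw_le_def)

lemma cw_le_refl: "cw_le a a"
  by (simp add: cw_le_def list_all2_refl)

lemma mono_hard_fun:
  "length s = length a \<Longrightarrow> cw_le a b \<Longrightarrow> cw_le (hard_fun s a) (hard_fun s b)"
proof (induction s arbitrary: a b)
  case Nil
  then show ?case by (simp add: cw_le_def)
next
  case (Cons x s)
  obtain y a' z b' where ab: "a = y # a'" "b = z # b'"
    using Cons.prems by (cases a; cases b) (auto simp: cw_le_def)
  have "y \<le> z" "cw_le a' b'" "length a' = length b'"
    using Cons.prems by (auto simp: ab cw_le_Cons cw_le_def list_all2_lengthD)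
  then show ?case using Cons
    by (auto simp: ab cw_le_Cons cw_le_replicate_True cw_le_replicate_False length_hard_fun
        cw_le_refl)
qed

lemma tarski_input_hard_instance: "s \<in> cube k \<Longrightarrow> tarski_input k (hard_instance k s)"
  by (auto simp: tarski_input_def hard_instance_def cube_def length_hard_fun mono_hard_fun)

lemma fixed_point_hard_instance:
  "s \<in> cube k \<Longrightarrow> x \<in> cube k \<and> hard_instance k s x = x \<longleftrightarrow> x = s"
  using hard_fun_fixed_point[of s x] by (auto simp: hard_instance_def cube_def hard_fun_self)

lemma hard_fun_take_cong:
  "take n s = take n s' \<Longrightarrow> take n v \<noteq> take n s \<Longrightarrow> length s = length v \<Longrightarrow> length s' = length v
    \<Longrightarrow> hard_fun s v = hard_fun s' v"
proof (induction s v arbitrary: n s' rule: hard_fun.induct)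
  case (1 a s b v)
  then obtain n' a' s'' where "n = Suc n'" "s' = a' # s''"
    by (cases n; cases s') auto
  with 1 show ?case by auto
qed auto

lemma finite_cube: "finite (cube k)"
  using finite_lists_length_eq[of "UNIV :: bool set" k] by (simp add: cube_def)

lemma card_cube: "card (cube k) = 2 ^ k"
  using card_lists_length_eq[of "UNIV :: bool set" k] by (simp add: cube_def)

definition cylinder :: "nat \<Rightarrow> bool list \<Rightarrow> bool list set" where
  "cylinder k p = {s \<in> cube k. take (length p) s = p}"

lemma cylinder_Nil: "cylinder k [] = cube k"
  by (simp add: cylinder_def)

lemma finite_cylinder: "finite (cylinder k p)"
  using finite_cube by (simp add: cylinder_def)

lemma cylinder_eq_image: "length p \<le> k \<Longrightarrow> cylinder k p = (\<lambda>q. p @ q) ` cube (k - length p)"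
  by (auto simp: cylinder_def cube_def image_iff) (metis append_take_drop_id length_drop)

lemma card_cylinder: "length p \<le> k \<Longrightarrow> card (cylinder k p) = 2 ^ (k - length p)"
  by (simp add: cylinder_eq_image card_image inj_on_def card_cube)

lemma cylinder_snoc_split:
  "length p < k \<Longrightarrow> cylinder k p = cylinder k (p @ [b]) \<union> cylinder k (p @ [\<not> b])"
  by (cases b) (auto simp: cylinder_def cube_def take_Suc_conv_app_nth)

lemma cylinder_snoc_disjoint: "cylinder k (p @ [b]) \<inter> cylinder k (p @ [\<not> b]) = {}"
  by (auto simp: cylinder_def)

text \<open>\<open>F s\<close> is the input whose intended fixed point is the secret \<open>s\<close>.\<close>

type_synonym input_family = "bool list \<Rightarrow> bool list \<Rightarrow> bool list"

definition prefix_revealing :: "nat \<Rightarrow> input_family \<Rightarrow> bool" where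
  "prefix_revealing k F \<longleftrightarrow>
     (\<forall>p v. v \<notin> cylinder k p \<longrightarrow> (\<forall>s\<in>cylinder k p. \<forall>s'\<in>cylinder k p. F s v = F s' v))"

lemma prefix_revealing_hard_instance: "prefix_revealing k (hard_instance k)"
  unfolding prefix_revealing_def
proof (intro allI impI ballI)
  fix p v s s'
  assume "v \<notin> cylinder k p" "s \<in> cylinder k p" "s' \<in> cylinder k p"
  then show "hard_instance k s v = hard_instance k s' v"
    using hard_fun_take_cong[of "length p" s s' v]
    by (auto simp: hard_instance_def cylinder_def cube_def)
qed

definition successes :: "input_family \<Rightarrow> dtree \<Rightarrow> bool list set \<Rightarrow> nat" where
  "successes F t S = card {s \<in> S. alg_output (F s) t = s}"

definition total_queries :: "input_family \<Rightarrow> dtree \<Rightarrow> bool list set \<Rightarrow> nat" where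
  "total_queries F t S = (\<Sum>s\<in>S. num_queries (F s) t)"

definition cylinder_bound ::
    "nat \<Rightarrow> input_family \<Rightarrow> dtree \<Rightarrow> bool list \<Rightarrow> bool" where
  "cylinder_bound k F t p \<longleftrightarrow>
     (k - length p + 1) * successes F t (cylinder k p)
       \<le> card (cylinder k p) + 2 * total_queries F t (cylinder k p)"

lemma successes_le_card: "finite S \<Longrightarrow> successes F t S \<le> card S"
  unfolding successes_def by (rule card_mono) auto

lemma successes_Leaf_le_1: "successes F (Leaf x) S \<le> 1"
  unfolding successes_def alg_output_def
  by (rule order_trans[OF card_mono[of "{x}"]]) auto

lemma successes_Un:
  "finite A \<Longrightarrow> finite B \<Longrightarrow> A \<inter> B = {} \<Longrightarrow> successes F t (A \<union> B) = successes F t A + successes F t B"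
  unfolding successes_def by (subst card_Un_disjoint[symmetric]) (auto intro: arg_cong[where f = card])

lemma total_queries_Un:
  "finite A \<Longrightarrow> finite B \<Longrightarrow> A \<inter> B = {} \<Longrightarrow>
    total_queries F t (A \<union> B) = total_queries F t A + total_queries F t B"
  unfolding total_queries_def by (rule sum.union_disjoint)

lemma successes_Query_const:
  "\<forall>s\<in>S. F s v = a \<Longrightarrow> successes F (Query v h) S = successes F (h a) S"
  unfolding successes_def alg_output_def by (auto simp: Let_def intro: arg_cong[where f = card])

lemma total_queries_Query_const:
  "\<forall>s\<in>S. F s v = a \<Longrightarrow> total_queries F (Query v h) S = total_queries F (h a) S + card S"
  unfolding total_queries_def num_queries_def by (simp add: Let_def sum_Suc)

lemma cylinder_bound_Query_outside:
  assumes F: "prefix_revealing k F" and v: "v \<notin> cylinder k p"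
    and IH: "\<And>a. cylinder_bound k F (h a) p"
  shows "(k - length p + 1) * successes F (Query v h) (cylinder k p) + 2 * card (cylinder k p)
           \<le> card (cylinder k p) + 2 * total_queries F (Query v h) (cylinder k p)"
proof (cases "cylinder k p = {}")
  case True
  then show ?thesis by (simp add: successes_def total_queries_def)
next
  case False
  then obtain s0 where "s0 \<in> cylinder k p" by blast
  with F v have const: "\<forall>s\<in>cylinder k p. F s v = F s0 v"
    unfolding prefix_revealing_def by blast
  show ?thesis
    using IH[of "F s0 v"]
    by (simp add: cylinder_bound_def successes_Query_const[where F = F and v = v and h = h, OF const]
        total_queries_Query_const[where F = F and v = v and h = h, OF const])
qed

lemma cylinder_bound_snoc:
  assumes p: "length p < k"
    and A: "cylinder_bound k F t (p @ [b])"
    and B: "(k - length p) * successes F t (cylinder k (p @ [\<not> b])) + 2 * card (cylinder k (p @ [\<not> b]))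
          \<le> card (cylinder k (p @ [\<not> b])) + 2 * total_queries F t (cylinder k (p @ [\<not> b]))"
  shows "cylinder_bound k F t p"
proof -
  define m where "m = k - Suc (length p)"
  let ?A = "cylinder k (p @ [b])" and ?B = "cylinder k (p @ [\<not> b])"
  have m: "k - length p = Suc m" using p by (simp add: m_def)
  have cards: "card ?A = 2 ^ m" "card ?B = 2 ^ m" "card (cylinder k p) = 2 * 2 ^ m"
    using p m by (simp_all add: card_cylinder m_def)
  have split: "cylinder k p = ?A \<union> ?B" "?A \<inter> ?B = {}"
    using p by (simp_all add: cylinder_snoc_split cylinder_snoc_disjoint)
  have succ: "successes F t (cylinder k p) = successes F t ?A + successes F t ?B"
    and total: "total_queries F t (cylinder k p) = total_queries F t ?A + total_queries F t ?B"
    unfolding split(1) using split(2) by (simp_all add: successes_Un total_queries_Un finite_cylinder)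
  have "successes F t (cylinder k p) \<le> 2 * 2 ^ m"
    using successes_le_card[OF finite_cylinder] cards(3) by metis
  with A B show ?thesis
    unfolding cylinder_bound_def succ total m cards by (simp add: m_def algebra_simps)
qed

lemma cylinder_bound_Query_inside:
  assumes F: "prefix_revealing k F" and v: "v \<in> cylinder k p"
    and IH: "\<And>a q. length q \<le> k \<Longrightarrow> cylinder_bound k F (h a) q"
  shows "cylinder_bound k F (Query v h) p"
proof -
  have lv: "length v = k" and p: "p = take (length p) v"
    using v by (auto simp: cylinder_def cube_def)
  have "length p \<le> k"
    using v by (auto simp: cylinder_def cube_def dest: arg_cong[where f = length])
  have "cylinder_bound k F (Query v h) (take n v)" if "n \<le> k" for n
    using that
  proof (induction rule: inc_induct)
    case base
    show ?case
      using successes_le_card[OF finite_cylinder, of F "Query v h" k v]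
      by (simp add: cylinder_bound_def lv)
  next
    case (step n)
    let ?q = "take n v @ [\<not> v ! n]"
    have snoc: "take (Suc n) v = take n v @ [v ! n]"
      using step.hyps lv by (simp add: take_Suc_conv_app_nth)
    have notin: "v \<notin> cylinder k ?q"
      using snoc lv step.hyps by (auto simp: cylinder_def)
    have IHq: "cylinder_bound k F (h a) ?q" for a
      using IH step.hyps by simp
    have eq: "k - length (take n v) = k - length ?q + 1"
      using step.hyps lv by simp
    have B: "(k - length (take n v)) * successes F (Query v h) (cylinder k ?q) + 2 * card (cylinder k ?q)
        \<le> card (cylinder k ?q) + 2 * total_queries F (Query v h) (cylinder k ?q)"
      unfolding eq by (rule cylinder_bound_Query_outside[OF F notin IHq])
    show ?case
    proof (rule cylinder_bound_snoc[OF _ _ B])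
      show "length (take n v) < k"
        using step.hyps lv by simp
      show "cylinder_bound k F (Query v h) (take n v @ [v ! n])"
        using step.IH unfolding snoc .
    qed
  qed
  with p \<open>length p \<le> k\<close> show ?thesis by metis
qed

lemma prefix_revealing_cylinder_bound:
  assumes F: "prefix_revealing k F" and p: "length p \<le> k"
  shows "cylinder_bound k F t p"
  using p
proof (induction t arbitrary: p)
  case (Leaf x)
  have "(k - length p + 1) * successes F (Leaf x) (cylinder k p) \<le> k - length p + 1"
    using successes_Leaf_le_1[of F x "cylinder k p"] by (metis mult_le_mono2 mult_1_right)
  also have "\<dots> \<le> card (cylinder k p)"
    using Leaf card_cylinder less_exp by (simp add: Suc_leI)
  finally show ?case by (simp add: cylinder_bound_def)
next
  case (Query v h)
  show ?case
  proof (cases "v \<in> cylinder k p")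
    case True
    with F Query show ?thesis by (intro cylinder_bound_Query_inside) auto
  next
    case False
    with F Query show ?thesis
      using cylinder_bound_Query_outside[OF F False, of h] by (simp add: cylinder_bound_def)
  qed
qed

lemma successes_cube_bound:
  "prefix_revealing k F \<Longrightarrow> (k + 1) * successes F t (cube k) \<le> 2 ^ k + 2 * total_queries F t (cube k)"
  using prefix_revealing_cylinder_bound[of k F "[]" t] by (simp add: cylinder_bound_def cylinder_Nil card_cube)

lemma expected_successes_bound:
  assumes "prefix_revealing k F"
  shows "of_nat (k + 1) * (\<Sum>s\<in>cube k. emeasure (measure_pmf T) {t. alg_output (F s) t = s})
           \<le> of_nat (2 ^ k) + 2 * (\<Sum>s\<in>cube k. expected_queries T (F s))"
proof -
  have succ: "(\<Sum>s\<in>cube k. indicator {t. alg_output (F s) t = s} t) = (of_nat (successes F t (cube k)) :: ennreal)"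
    for t by (simp add: successes_def indicator_def finite_cube Int_def)
  have total: "(\<Sum>s\<in>cube k. ennreal (real (num_queries (F s) t))) = of_nat (total_queries F t (cube k))"
    for t by (simp add: total_queries_def ennreal_of_nat_eq_real_of_nat)
  have "of_nat (k + 1) * (\<Sum>s\<in>cube k. emeasure (measure_pmf T) {t. alg_output (F s) t = s})
      = (\<integral>\<^sup>+t. of_nat ((k + 1) * successes F t (cube k)) \<partial>measure_pmf T)"
    by (simp only: of_nat_mult flip: succ) (simp add: nn_integral_cmult nn_integral_sum finite_cube)
  also have "\<dots> \<le> (\<integral>\<^sup>+t. of_nat (2 ^ k + 2 * total_queries F t (cube k)) \<partial>measure_pmf T)"
    by (intro nn_integral_mono of_nat_mono successes_cube_bound assms)
  also have "\<dots> = of_nat (2 ^ k) + 2 * (\<Sum>s\<in>cube k. expected_queries T (F s))"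
    by (simp only: of_nat_add of_nat_mult flip: total)
      (simp add: nn_integral_add nn_integral_cmult nn_integral_sum expected_queries_def
        measure_pmf.emeasure_space_1 del: sum_ennreal)
  finally show ?thesis .
qed

lemma solves_hard_instance:
  assumes "solves k T" "s \<in> cube k"
  shows "ennreal (9/10) \<le> emeasure (measure_pmf T) {t. alg_output (hard_instance k s) t = s}"
proof -
  let ?out = "\<lambda>t. alg_output (hard_instance k s) t"
  have "9/10 \<le> measure_pmf.prob T {t. ?out t \<in> cube k \<and> hard_instance k s (?out t) = ?out t}"
    using assms tarski_input_hard_instance unfolding solves_def by blast
  then show ?thesis
    unfolding fixed_point_hard_instance[OF assms(2)]
    by (simp add: measure_pmf.emeasure_eq_measure)
qed

lemma solves_expected_queries_bound:
  assumes "solves k T"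
  shows "of_nat (k + 1) * ennreal (9/10) \<le> 1 + 2 * (SUP f\<in>{f. tarski_input k f}. expected_queries T f)"
    (is "_ \<le> 1 + 2 * ?M")
proof -
  let ?N = "of_nat (2 ^ k) :: ennreal"
  have "?N * (of_nat (k + 1) * ennreal (9/10)) = of_nat (k + 1) * (\<Sum>s\<in>cube k. ennreal (9/10))"
    by (simp add: card_cube mult_ac)
  also have "\<dots> \<le> of_nat (k + 1) * (\<Sum>s\<in>cube k. emeasure (measure_pmf T) {t. alg_output (hard_instance k s) t = s})"
    by (intro mult_left_mono sum_mono solves_hard_instance assms) auto
  also have "\<dots> \<le> ?N + 2 * (\<Sum>s\<in>cube k. expected_queries T (hard_instance k s))"
    by (rule expected_successes_bound[OF prefix_revealing_hard_instance])
  also have "\<dots> \<le> ?N + 2 * (\<Sum>s\<in>cube k. ?M)"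
    by (intro add_left_mono mult_left_mono sum_mono SUP_upper) (auto simp: tarski_input_hard_instance)
  also have "\<dots> = ?N * (1 + 2 * ?M)"
    by (simp add: card_cube distrib_left mult_ac)
  finally have "?N * (of_nat (k + 1) * ennreal (9/10)) \<le> ?N * (1 + 2 * ?M)" .
  moreover have "?N \<noteq> 0" "?N \<noteq> \<top>"
    by (simp, rule ennreal_of_nat_neq_top)
  ultimately show ?thesis
    by (metis ennreal_mult_le_mult_iff)
qed

lemma solves_expected_queries_ge:
  assumes "solves k T"
  shows "ennreal (2/5 * real k) \<le> (SUP f\<in>{f. tarski_input k f}. expected_queries T f)"
    (is "_ \<le> ?M")
proof (cases ?M)
  case (real m)
  have "of_nat (k + 1) * ennreal (9/10) = ennreal (real (k + 1) * (9/10))"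
    unfolding ennreal_of_nat_eq_real_of_nat by (rule ennreal_mult[symmetric]) auto
  moreover have "1 + 2 * ?M = ennreal (1 + 2 * m)"
    using real by (simp add: ennreal_plus ennreal_mult)
  ultimately have "ennreal (real (k + 1) * (9/10)) \<le> ennreal (1 + 2 * m)"
    using solves_expected_queries_bound[OF assms] by (simp only:)
  then have "real (k + 1) * (9/10) \<le> 1 + 2 * m"
    using real by (subst (asm) ennreal_le_iff) auto
  then show ?thesis
    using real by (cases "k = 0") (auto intro!: ennreal_leI)
qed (metis top_greatest)

theorem proposition6:
  shows "\<exists>c::real. c > 0 \<and> (\<forall>k::nat. rand_query_complexity k \<ge> ennreal (c * real k))"
proof (intro exI[of _ "2/5"] conjI allI)
  fix k :: nat
  show "ennreal (2/5 * real k) \<le> rand_query_complexity k"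
    unfolding rand_query_complexity_def
    by (rule INF_greatest, rule solves_expected_queries_ge) simp
qed simp

end
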